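(* Let $x$ be a real number. The number of primes $p$ for which $P^+(p^2-1)\le x$ is at most $3\cdot 7^{1+2\pi(x)}$.
   Context: $P^+(n)$ denotes the largest prime divisor of an integer $n\ge 2$ (with $P^+(1)=1$), and $\pi(x)$ is the number of primes not exceeding $x$. *)

theory Defs
  imports "HOL-Computational_Algebra.Primes" Complex_Main
begin

text \<open>Largest prime divisor of n, with the convention P^+(1) = 1 (also used for n = 0,
which never occurs in the statement since p^2 - 1 \<ge> 3 for primes p).\<close>
definition Pplus :: "nat \<Rightarrow> nat" where
  "Pplus n = (if n \<le> 1 then 1 else Max (prime_factors n))"

definition prime_pi :: "real \<Rightarrow> nat" where
  "prime_pi x = card {p::nat. prime p \<and> real p \<le> x}"

end

theory Submission
  imports Defs "HOL-Computational_Algebra.Squarefree"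
begin

text \<open>If p is such a prime, write p^2 - 1 = d y^2 with d squarefree. Then d is a product of
  primes \<le> x, which leaves at most 2^\<pi>(x) choices, and (p, y) solves the Pell equation
  X^2 - d Y^2 = 1, so p + y \<surd>d = \<epsilon>^n for the fundamental solution \<epsilon> of that equation.
  Since X_s divides X_(rs) for odd r, primality of p = X_n forces n = 2^j. The numbers
  X_1, X_2, X_4, ..., X_(2^(j-1)) are pairwise coprime, exceed 1 and all divide Y_(2^j) = y,
  whose prime factors are \<le> x; hence j \<le> \<pi>(x). So there are at most
  2^\<pi>(x) (\<pi>(x) + 1) \<le> 3 * 7^(1 + 2\<pi>(x)) such primes.\<close>

lemma card_le_card_prime_factors_if_coprime_divisors:
  fixes m :: "'a :: factorial_semiring" and f :: "'b \<Rightarrow> 'a"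
  assumes "m \<noteq> 0"
    and nonunit: "\<And>i. i \<in> I \<Longrightarrow> \<not> is_unit (f i)"
    and dvd: "\<And>i. i \<in> I \<Longrightarrow> f i dvd m"
    and coprime: "\<And>i k. i \<in> I \<Longrightarrow> k \<in> I \<Longrightarrow> i \<noteq> k \<Longrightarrow> coprime (f i) (f k)"
  shows "card I \<le> card (prime_factors m)"
proof -
  have "\<exists>q. prime q \<and> q dvd f i" if "i \<in> I" for i
    using prime_divisor_exists[of "f i"] nonunit[OF that] dvd[OF that] \<open>m \<noteq> 0\<close>
    by (metis dvd_0_left)
  then obtain q where q: "\<And>i. i \<in> I \<Longrightarrow> prime (q i) \<and> q i dvd f i" by metis
  have "inj_on q I"
  proof (rule inj_onI, rule ccontr)
    fix i k assume "i \<in> I" "k \<in> I" "q i = q k" "i \<noteq> k"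
    then have "is_unit (q i)"
      using q coprime coprime_common_divisor by metis
    then show False using q \<open>i \<in> I\<close> not_prime_unit by blast
  qed
  moreover have "q ` I \<subseteq> prime_factors m"
    using q dvd \<open>m \<noteq> 0\<close> dvd_trans by (fastforce simp: in_prime_factors_iff)
  ultimately show ?thesis
    by (metis card_image card_mono finite_set_mset)
qed

text \<open>pell_power D a b n = (x, y) where x + y \<surd>D = (a + b \<surd>D)^n.\<close>
primrec pell_power :: "int \<Rightarrow> int \<Rightarrow> int \<Rightarrow> nat \<Rightarrow> int \<times> int" where
  "pell_power D a b 0 = (1, 0)"
| "pell_power D a b (Suc n) =
     (a * fst (pell_power D a b n) + D * b * snd (pell_power D a b n),
      b * fst (pell_power D a b n) + a * snd (pell_power D a b n))"

locale pell_unit =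
  fixes D a b :: int
  assumes D_pos: "D > 0" and a_pos: "a > 0" and b_pos: "b > 0"
    and norm_ab: "a^2 - D * b^2 = 1"
begin

definition X :: "nat \<Rightarrow> int" where "X n = fst (pell_power D a b n)"
definition Y :: "nat \<Rightarrow> int" where "Y n = snd (pell_power D a b n)"

lemma X_0 [simp]: "X 0 = 1" and Y_0 [simp]: "Y 0 = 0"
  and X_Suc: "X (Suc n) = a * X n + D * b * Y n"
  and Y_Suc: "Y (Suc n) = b * X n + a * Y n"
  by (simp_all add: X_def Y_def)

lemma norm_XY: "X n ^ 2 - D * Y n ^ 2 = 1"
proof (induction n)
  case (Suc n)
  have "X (Suc n) ^ 2 - D * Y (Suc n) ^ 2 = (a^2 - D * b^2) * (X n ^ 2 - D * Y n ^ 2)"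
    unfolding X_Suc Y_Suc by (simp add: power2_eq_square algebra_simps)
  with Suc norm_ab show ?case by simp
qed simp

lemma a_ge_2: "a \<ge> 2"
proof -
  have "D * b^2 > 0" using D_pos b_pos by simp
  then have "a^2 > 1^2" using norm_ab by simp
  then have "a > 1" using a_pos power_less_imp_less_base by fastforce
  then show ?thesis by simp
qed

lemma X_ge_1: "X n \<ge> 1" and Y_nonneg: "Y n \<ge> 0"
proof (induction n)
  case (Suc n)
  have "a * X n \<ge> 1" using Suc a_ge_2 mult_le_cancel_right1[of "X n" a] by linarith
  then show "X (Suc n) \<ge> 1" "Y (Suc n) \<ge> 0"
    using Suc D_pos a_pos b_pos by (simp_all add: X_Suc Y_Suc add_increasing2)
qed simp_all

lemma strict_mono_X: "strict_mono X"
proof (rule strict_mono_Suc_iff[THEN iffD2], rule allI)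
  fix n
  have "a * X n \<ge> 2 * X n" using a_ge_2 X_ge_1[of n] by (intro mult_right_mono) simp_all
  moreover have "D * b * Y n \<ge> 0" using D_pos b_pos Y_nonneg[of n] by simp
  ultimately show "X n < X (Suc n)" using X_ge_1[of n] unfolding X_Suc by linarith
qed

lemma Y_eq_0_iff: "Y n = 0 \<longleftrightarrow> n = 0"
proof
  assume "Y n = 0"
  then have "X n = X 0" using norm_XY[of n] X_ge_1[of n] by (simp add: power2_eq_1_iff)
  then show "n = 0" using strict_mono_eq[OF strict_mono_X] by blast
qed simp

lemma X_add: "X (m + n) = X m * X n + D * Y m * Y n"
  and Y_add: "Y (m + n) = X m * Y n + Y m * X n"
  by (induction n) (simp_all add: X_Suc Y_Suc algebra_simps)

lemma Y_double: "Y (2 * n) = 2 * X n * Y n"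
proof -
  have "Y (2 * n) = X n * Y n + Y n * X n" using Y_add[of n n] by (simp only: mult_2[of n])
  then show ?thesis by simp
qed

lemma X_add_twice: "X (m + 2 * s) = 2 * X s * X (m + s) - X m"
proof -
  have "X (m + 2 * s) = X (m + s) * X s + D * Y (m + s) * Y s"
    using X_add[of "m + s" s] by (simp only: mult_2 add.assoc)
  then show ?thesis
    using X_add[of m s] Y_add[of m s] norm_XY[of s] by algebra
qed

lemma X_dvd_X_odd_mult:
  assumes "odd r"
  shows "X s dvd X (r * s)"
proof -
  obtain t where r: "r = 2 * t + 1" using assms oddE by blast
  have "X s dvd X ((2 * t + 1) * s)"
  proof (induction t)
    case (Suc t)
    have "X ((2 * Suc t + 1) * s) = X s * (2 * X ((2 * t + 1) * s + s)) - X ((2 * t + 1) * s)"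
      using X_add_twice[of "(2 * t + 1) * s" s] by (simp add: algebra_simps)
    then show ?case using Suc by simp
  qed simp
  then show ?thesis using r by simp
qed

lemma power_of_two_if_prime_X:
  assumes "prime (X n)"
  obtains j where "n = 2 ^ j"
proof -
  have "n \<noteq> 0" using assms by (intro notI) simp
  then obtain r where n: "n = 2 ^ multiplicity 2 n * r" and "odd r"
    using multiplicity_decompose'[of n 2] by auto
  define s where "s = (2::nat) ^ multiplicity 2 n"
  have "r = 1"
  proof (rule ccontr)
    assume "r \<noteq> 1"
    with \<open>odd r\<close> have "r \<ge> 2" by presburger
    then have "s * 1 < s * r" by (intro mult_strict_left_mono) (simp_all add: s_def)
    then have "s < n" using n by (simp add: s_def)
    then have "X s < X n" using strict_mono_X by (simp add: strict_mono_less)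
    moreover have "X 0 < X s" using strict_mono_X by (rule strict_monoD) (simp add: s_def)
    moreover have "X s dvd X n"
      using X_dvd_X_odd_mult[OF \<open>odd r\<close>, of s] n by (simp add: s_def mult.commute)
    moreover have "X s \<ge> 0" using X_ge_1[of s] by simp
    ultimately have "X s = 1 \<or> X s = X n" using assms unfolding prime_int_iff by blast
    then show False using \<open>X s < X n\<close> \<open>X 0 < X s\<close> by simp
  qed
  then show ?thesis using n that by simp
qed

lemma coprime_X_Y: "coprime (X n) (Y n)"
proof (rule coprimeI)
  fix c assume "c dvd X n" "c dvd Y n"
  then have "c dvd X n ^ 2 - D * Y n ^ 2" by (simp add: power2_eq_square)
  then show "is_unit c" by (simp add: norm_XY)
qed

lemma Y_pow2_dvd: "i \<le> l \<Longrightarrow> Y (2 ^ i) dvd Y (2 ^ l)"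
proof (induction l rule: dec_induct)
  case (step l)
  then show ?case using Y_double[of "2 ^ l"] by simp
qed simp

lemma X_pow2_dvd_Y_pow2:
  assumes "i < l"
  shows "X (2 ^ i) dvd Y (2 ^ l)"
proof -
  have "X (2 ^ i) dvd Y (2 ^ Suc i)" using Y_double[of "2 ^ i"] by simp
  also have "\<dots> dvd Y (2 ^ l)" using assms by (intro Y_pow2_dvd) simp
  finally show ?thesis .
qed

lemma coprime_X_pow2: "i \<noteq> l \<Longrightarrow> coprime (X (2 ^ i)) (X (2 ^ l))"
proof (induction i l rule: linorder_wlog)
  case (le i l)
  then have "X (2 ^ i) dvd Y (2 ^ l)" using X_pow2_dvd_Y_pow2 by simp
  then show ?case using coprime_divisors[OF _ dvd_refl] coprime_X_Y coprime_commute by blast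
qed (simp add: coprime_commute)

lemma j_le_card_prime_factors_Y_pow2: "j \<le> card (prime_factors (Y (2 ^ j)))"
proof -
  have "card {..<j} \<le> card (prime_factors (Y (2 ^ j)))"
  proof (rule card_le_card_prime_factors_if_coprime_divisors)
    show "Y (2 ^ j) \<noteq> 0" by (simp add: Y_eq_0_iff)
    fix i assume "i \<in> {..<j}"
    have "X 0 < X (2 ^ i)" using strict_mono_X by (rule strict_monoD) simp
    then show "\<not> is_unit (X (2 ^ i))" by simp
    show "X (2 ^ i) dvd Y (2 ^ j)" using \<open>i \<in> {..<j}\<close> X_pow2_dvd_Y_pow2 by simp
  qed (simp add: coprime_X_pow2)
  then show ?thesis by simp
qed

end

locale pell_fundamental = pell_unit +
  assumes b_minimal: "\<And>x y. x > 0 \<Longrightarrow> y > 0 \<Longrightarrow> x^2 - D * y^2 = 1 \<Longrightarrow> b \<le> y"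
begin

text \<open>Division by a + b \<surd>D: (x', y') corresponds to (x + y \<surd>D)(a - b \<surd>D).\<close>
lemma descent_step:
  assumes "x > 0" "y > 0" and xy: "x^2 - D * y^2 = 1"
  obtains x' y' where "x' > 0" "y' \<ge> 0" "y' < y" "x'^2 - D * y'^2 = 1"
    and "x = a * x' + D * b * y'" "y = b * x' + a * y'"
proof -
  define x' where "x' = x * a - D * y * b"
  define y' where "y' = a * y - x * b"
  have id: "x'^2 - D * y'^2 = 1" "x = a * x' + D * b * y'" "y = b * x' + a * y'"
    and squares: "(x * a)^2 - (D * y * b)^2 = 1 + D * y^2 + D * b^2"
      "(a * y)^2 - (x * b)^2 = y^2 - b^2"
    unfolding x'_def y'_def using xy norm_ab by algebra+
  have "(x * a)^2 - (D * y * b)^2 > 0"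
    unfolding squares(1) using D_pos \<open>y > 0\<close> b_pos by (simp add: add_pos_pos)
  then have "(D * y * b)^2 < (x * a)^2" by simp
  then have "D * y * b < x * a" by (rule power2_less_imp_less) (use \<open>x > 0\<close> a_pos in simp)
  then have "x' > 0" unfolding x'_def by simp
  have "b^2 \<le> y^2" using b_minimal[OF \<open>x > 0\<close> \<open>y > 0\<close> xy] b_pos by (intro power_mono) simp_all
  then have "(a * y)^2 - (x * b)^2 \<ge> 0" unfolding squares(2) by simp
  then have "(x * b)^2 \<le> (a * y)^2" by simp
  then have "x * b \<le> a * y" by (rule power2_le_imp_le) (use a_pos \<open>y > 0\<close> in simp)
  then have "y' \<ge> 0" unfolding y'_def by simp
  have "b * x' > 0" "a * y' \<ge> y'" using b_pos \<open>x' > 0\<close> a_ge_2 \<open>y' \<ge> 0\<close>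
    by (simp_all add: mult_le_cancel_right1)
  then have "y' < y" using id(3) by linarith
  with id \<open>x' > 0\<close> \<open>y' \<ge> 0\<close> show ?thesis using that by blast
qed

lemma solution_eq_power:
  "x > 0 \<Longrightarrow> y \<ge> 0 \<Longrightarrow> x^2 - D * y^2 = 1 \<Longrightarrow> \<exists>n. X n = x \<and> Y n = y"
proof (induction "nat y" arbitrary: x y rule: less_induct)
  case less
  show ?case
  proof (cases "y = 0")
    case True
    then show ?thesis using less.prems by (intro exI[of _ 0]) (simp add: power2_eq_1_iff)
  next
    case False
    with less.prems obtain x' y' where "x' > 0" "y' \<ge> 0" "y' < y" "x'^2 - D * y'^2 = 1"
      and x: "x = a * x' + D * b * y'" and y: "y = b * x' + a * y'"
      using descent_step by (metis order_le_neq_trans)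
    with less.hyps obtain n where "X n = x'" "Y n = y'" by fastforce
    then show ?thesis using x y by (intro exI[of _ "Suc n"]) (simp add: X_Suc Y_Suc)
  qed
qed

end

lemma pell_fundamental_exists:
  assumes "D > 0" "x > 0" "y > 0" "x^2 - D * y^2 = (1::int)"
  shows "\<exists>a b. pell_fundamental D a b"
proof -
  define P where "P n \<longleftrightarrow> n > 0 \<and> (\<exists>x::int. x > 0 \<and> x^2 - D * (int n)^2 = 1)" for n
  define b where "b = (LEAST n. P n)"
  have "P (nat y)" unfolding P_def using assms by auto
  then have "P b" unfolding b_def by (rule LeastI)
  then obtain a where "a > 0" "a^2 - D * (int b)^2 = 1" "b > 0" unfolding P_def by blast
  have "pell_fundamental D a (int b)"
  proof
    fix x' y' :: int assume "x' > 0" "y' > 0" "x'^2 - D * y'^2 = 1"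
    then have "P (nat y')" unfolding P_def by auto
    then have "b \<le> nat y'" unfolding b_def by (rule Least_le)
    then show "int b \<le> y'" using \<open>y' > 0\<close> by simp
  qed (use \<open>D > 0\<close> \<open>a > 0\<close> \<open>b > 0\<close> \<open>a^2 - D * (int b)^2 = 1\<close> in simp_all)
  then show ?thesis by blast
qed

text \<open>Arbitrary when X^2 - D Y^2 = 1 has no positive solution; it is only used when it has one.\<close>
definition fundamental_pell_solution :: "int \<Rightarrow> int \<times> int" where
  "fundamental_pell_solution D = (SOME (a, b). pell_fundamental D a b)"

definition fundamental_pell_power :: "int \<Rightarrow> nat \<Rightarrow> int \<times> int" where
  "fundamental_pell_power D = case_prod (pell_power D) (fundamental_pell_solution D)"

lemma fundamental_pell_power_eq_prime:
  fixes p y D :: int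
  assumes "D > 0" "prime p" "y > 0" and py: "p^2 - D * y^2 = 1"
  obtains j where "j \<le> card (prime_factors y)" "fundamental_pell_power D (2 ^ j) = (p, y)"
proof -
  have "p > 0" using \<open>prime p\<close> by (rule prime_gt_0_int)
  then have "\<exists>ab. case ab of (a, b) \<Rightarrow> pell_fundamental D a b"
    using pell_fundamental_exists[OF \<open>D > 0\<close> _ \<open>y > 0\<close> py] by auto
  then have "case fundamental_pell_solution D of (a, b) \<Rightarrow> pell_fundamental D a b"
    unfolding fundamental_pell_solution_def by (rule someI_ex)
  then obtain a b where ab: "fundamental_pell_solution D = (a, b)" "pell_fundamental D a b"
    by (cases "fundamental_pell_solution D") simp
  interpret pell_fundamental D a b by (fact ab(2))
  obtain n where "X n = p" "Y n = y"
    using solution_eq_power[OF \<open>p > 0\<close> _ py] \<open>y > 0\<close> by auto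
  moreover obtain j where "n = 2 ^ j"
    using power_of_two_if_prime_X \<open>prime p\<close> \<open>X n = p\<close> by blast
  moreover have "fundamental_pell_power D n = (X n, Y n)"
    by (simp add: fundamental_pell_power_def ab(1) X_def Y_def)
  ultimately show ?thesis using that j_le_card_prime_factors_Y_pow2[of j] by simp
qed

lemma card_prime_factors_of_nat: "card (prime_factors (int n)) = card (prime_factors n)"
proof -
  have "prime_factors (int n) = int ` prime_factors n"
  proof safe
    fix q assume "q \<in> prime_factors (int n)"
    then have "q = int (nat q)" "nat q \<in> prime_factors n"
      by (auto simp: in_prime_factors_iff prime_ge_0_int nat_dvd_iff)
    then show "q \<in> int ` prime_factors n" by blast
  qed (auto simp: in_prime_factors_iff)
  then show ?thesis by (simp add: card_image)
qed

lemma prime_factors_le_Pplus: "q \<in> prime_factors n \<Longrightarrow> q \<le> Pplus n"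
  by (cases "n \<le> 1") (auto simp: Pplus_def le_Suc_eq)

lemma prime_factors_subset_if_Pplus_le:
  assumes "real (Pplus n) \<le> x"
  shows "prime_factors n \<subseteq> {q. prime q \<and> real q \<le> x}"
proof
  fix q assume q: "q \<in> prime_factors n"
  have "real q \<le> real (Pplus n)" using prime_factors_le_Pplus[OF q] by simp
  with assms q show "q \<in> {q. prime q \<and> real q \<le> x}" by (simp add: in_prime_factors_iff)
qed

lemma finite_primes_le: "finite {q::nat. prime q \<and> real q \<le> x}"
  by (rule finite_subset[of _ "{..nat \<lfloor>x\<rfloor>}"]) (auto simp: le_nat_iff le_floor_iff)

lemma prod_prime_factors_squarefree:
  assumes "squarefree (n :: nat)"
  shows "\<Prod>(prime_factors n) = n"
proof -
  have "n \<noteq> 0" using assms by (metis not_squarefree_0)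
  then have "n = (\<Prod>p \<in> prime_factors n. p ^ multiplicity p n)"
    by (simp add: prime_factorization_nat)
  also have "\<dots> = \<Prod>(prime_factors n)"
    using squarefree_factorial_semiring'[OF \<open>n \<noteq> 0\<close>] assms by simp
  finally show ?thesis by simp
qed

lemma prime_eq_fundamental_pell_power:
  fixes p :: nat and S :: "nat set"
  assumes "prime p" and S: "prime_factors (p^2 - 1) \<subseteq> S" "finite S"
  shows "\<exists>d \<in> Prod ` Pow S. \<exists>j \<le> card S. fst (fundamental_pell_power (int d) (2 ^ j)) = int p"
proof -
  define n where "n = p^2 - 1"
  define d where "d = squarefree_part n"
  define y where "y = square_part n"
  have "p^2 \<ge> 2^2" using prime_ge_2_nat[OF \<open>prime p\<close>] by (rule power_mono) simp
  then have "n \<ge> 3" unfolding n_def by simp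
  have n: "n = d * y^2" unfolding d_def y_def by (rule squarefree_decompose)
  with \<open>n \<ge> 3\<close> have "d > 0" "y > 0" by (auto intro!: Nat.gr0I)
  have "int p ^ 2 - int d * int y ^ 2 = 1"
    using n \<open>n \<ge> 3\<close> unfolding n_def by (simp flip: of_nat_power of_nat_mult)
  then obtain j where j: "j \<le> card (prime_factors (int y))"
    and p: "fundamental_pell_power (int d) (2 ^ j) = (int p, int y)"
    using fundamental_pell_power_eq_prime[of "int d" "int p" "int y"] \<open>prime p\<close> \<open>d > 0\<close> \<open>y > 0\<close>
    by auto
  have "prime_factors y \<subseteq> prime_factors n" using n \<open>n \<ge> 3\<close> \<open>d > 0\<close> \<open>y > 0\<close>
    by (intro dvd_prime_factors) (simp_all add: power2_eq_square)
  then have "card (prime_factors y) \<le> card S"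
    using S unfolding n_def by (intro card_mono) simp_all
  with j have "j \<le> card S" by (simp add: card_prime_factors_of_nat)
  moreover have "d \<in> Prod ` Pow S"
  proof
    show "d = \<Prod>(prime_factors d)" unfolding d_def by (simp add: prod_prime_factors_squarefree)
    have "prime_factors d \<subseteq> prime_factors n" using n \<open>n \<ge> 3\<close> \<open>d > 0\<close> \<open>y > 0\<close>
      by (intro dvd_prime_factors) auto
    then show "prime_factors d \<in> Pow S" using S(1) unfolding n_def by auto
  qed
  ultimately show ?thesis using p by (intro bexI[of _ d] exI[of _ j]) simp_all
qed

lemma card_primes_square_minus_one_factors_in:
  assumes "finite S"
  defines "P \<equiv> {p::nat. prime p \<and> prime_factors (p^2 - 1) \<subseteq> S}"
  shows "finite P \<and> card P \<le> 2 ^ card S * (card S + 1)"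
proof -
  define g where "g = (\<lambda>(d, j). nat (fst (fundamental_pell_power (int d) (2 ^ j))))"
  define T where "T = Prod ` Pow S \<times> {..card S}"
  have "P \<subseteq> g ` T"
  proof
    fix p assume "p \<in> P"
    then have "prime p" "prime_factors (p^2 - 1) \<subseteq> S" unfolding P_def by blast+
    then obtain d j where dj: "d \<in> Prod ` Pow S" "j \<le> card S"
      and p: "fst (fundamental_pell_power (int d) (2 ^ j)) = int p"
      using prime_eq_fundamental_pell_power[OF _ _ assms(1)] by meson
    have "p = g (d, j)" unfolding g_def using p by simp
    moreover have "(d, j) \<in> T" unfolding T_def using dj by blast
    ultimately show "p \<in> g ` T" by (rule image_eqI)
  qed
  have "finite T" using assms(1) by (simp add: T_def)
  then have "finite (g ` T)" by (rule finite_imageI)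
  then have "card P \<le> card (g ` T)" using \<open>P \<subseteq> g ` T\<close> by (rule card_mono)
  also have "\<dots> \<le> card T" using \<open>finite T\<close> by (rule card_image_le)
  also have "\<dots> = card (Prod ` Pow S) * (card S + 1)" by (simp add: T_def card_cartesian_product)
  also have "\<dots> \<le> 2 ^ card S * (card S + 1)"
    using card_image_le[of "Pow S" Prod] assms(1) by (intro mult_right_mono) (simp_all add: card_Pow)
  finally show ?thesis using \<open>finite (g ` T)\<close> \<open>P \<subseteq> g ` T\<close> finite_subset by blast
qed

lemma two_power_mult_Suc_le: "(2::nat) ^ k * (k + 1) \<le> 3 * 7 ^ (1 + 2 * k)"
proof -
  have "(2::nat) ^ k * (k + 1) \<le> 2 ^ k * 2 ^ k"
    using Suc_leI[OF less_exp[of k]] by (intro mult_left_mono) simp_all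
  also have "\<dots> = 4 ^ k" by (simp flip: power_mult_distrib)
  also have "\<dots> \<le> 49 ^ k" by (rule power_mono) simp_all
  also have "\<dots> \<le> 3 * 7 ^ (1 + 2 * k)" by (simp add: power_mult)
  finally show ?thesis .
qed

theorem proposition8p7:
  fixes x :: real
  shows "finite {p::nat. prime p \<and> real (Pplus (p^2 - 1)) \<le> x} \<and>
         real (card {p::nat. prime p \<and> real (Pplus (p^2 - 1)) \<le> x})
           \<le> 3 * 7 ^ (1 + 2 * prime_pi x)"
proof -
  define S where "S = {q::nat. prime q \<and> real q \<le> x}"
  define A where "A = {p::nat. prime p \<and> real (Pplus (p^2 - 1)) \<le> x}"
  define P where "P = {p::nat. prime p \<and> prime_factors (p^2 - 1) \<subseteq> S}"
  have "A \<subseteq> P"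
    unfolding A_def P_def S_def using prime_factors_subset_if_Pplus_le by blast
  moreover have "finite P" "card P \<le> 2 ^ card S * (card S + 1)"
    using card_primes_square_minus_one_factors_in[OF finite_primes_le] unfolding P_def S_def
    by blast+
  ultimately have "finite A" "card A \<le> card P" using finite_subset card_mono by blast+
  have "prime_pi x = card S" unfolding prime_pi_def S_def ..
  note \<open>card A \<le> card P\<close>
  also have "card P \<le> 2 ^ card S * (card S + 1)" by fact
  also have "\<dots> \<le> 3 * 7 ^ (1 + 2 * prime_pi x)"
    unfolding \<open>prime_pi x = card S\<close> by (rule two_power_mult_Suc_le)
  finally have "real (card A) \<le> real (3 * 7 ^ (1 + 2 * prime_pi x))" by (simp only: of_nat_le_iff)
  with \<open>finite A\<close> show ?thesis unfolding A_def by simp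
qed

end
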